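(* There is a constant $C_0>0$ depending only on $\widetilde\mu$ such that the following holds. Let $\varepsilon\in(0,1)$ and let $\omega\in\Omega$ be such that there is $\widetilde n_0$ with $$\Big|L(E)-\frac1{n^2}\sum_{s=0}^{n^2-1}F_n(T^{\zeta_0+sn}\omega,E)\Big|<\varepsilon$$ for all $n,\zeta_0\in\mathbb Z$ with $n\ge\max(\widetilde n_0,(\log(|\zeta_0|+1))^{2/3})$ and all $E\in\hat\Sigma$. Then there exists $\widetilde n_1=\widetilde n_1(\omega,\varepsilon)$ such that: (1) for all $E\in\hat\Sigma$ and all $n,\zeta_0\in\mathbb Z$ with $n\ge\max(\widetilde n_1,\log^2(|\zeta_0|+1))$, $$\frac1n\log\|M_n^E(T^{\zeta_0}\omega)\|\le L(E)+2\varepsilon;$$ (2) for all $n,\zeta_0\in\mathbb Z$ with $n\ge\varepsilon^{-1}\max(\widetilde n_1,2\log^2(|\zeta_0|+1))$, all $E\in\hat\Sigma\setminus\sigma(H_{T^{\zeta_0}\omega,n})$ and all $j,k\in[0,n)$, $$|G^E_{T^{\zeta_0}\omega,n}(j,k)|\le\frac{\exp\big[(n-|j-k|)L(E)+C_0\varepsilon n\big]}{|\det[H_{T^{\zeta_0}\omega,n}-E]|}.$$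
   Context: Let $\widetilde\mu$ be a Borel probability measure on $\mathbb R$ with compact support $\mathcal A$ containing at least two points; $\Omega=\mathcal A^{\mathbb Z}$, $\mu=\widetilde\mu^{\mathbb Z}$, $(T\omega)_n=\omega_{n+1}$; $[H_\omega\psi](n)=\psi(n+1)+\psi(n-1)+\omega_n\psi(n)$ on $\ell^2(\mathbb Z)$. For $E\in\mathbb R$, $M^E(\alpha)=\begin{pmatrix}E-\alpha&-1\\1&0\end{pmatrix}$, $M_n^E(\omega)=M^E(\omega_{n-1})\cdots M^E(\omega_0)$ for $n\ge1$, $F_n(\omega,E)=\frac1n\log\|M_n^E(\omega)\|$, $L(E)=\lim_{n\to\infty}\frac1n\int\log\|M_n^E\|\,d\mu$. $\hat\Sigma=[-\kappa,\kappa]$ with $\kappa=2+\max_{\alpha\in\mathcal A}|\alpha|$. For $N\in\mathbb Z_+$, $H_{\omega,N}=P_{[0,N)}H_\omega P_{[0,N)}^*$ is the restriction of $H_\omega$ to $\ell^2([0,N)\cap\mathbb Z)$ ($P_\Lambda$ the coordinate projection), and $G^E_{\omega,N}(j,k)=\langle\delta_j,(H_{\omega,N}-E)^{-1}\delta_k\rangle$. *)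

theory Defs
  imports "HOL-Probability.Probability" "Jordan_Normal_Form.Char_Poly"
begin

definition msupp :: "real measure \<Rightarrow> real set" where
  "msupp m = {x. \<forall>U. open U \<and> x \<in> U \<longrightarrow> emeasure m U > 0}"

definition tm :: "real \<Rightarrow> real \<Rightarrow> real^2^2" where
  "tm E a = vector [vector [E - a, -1], vector [1, 0]]"

fun tmn :: "nat \<Rightarrow> real \<Rightarrow> (int \<Rightarrow> real) \<Rightarrow> real^2^2" where
  "tmn 0 E \<omega> = Finite_Cartesian_Product.mat 1"
| "tmn (Suc n) E \<omega> = tm E (\<omega> (int n)) ** tmn n E \<omega>"

definition mnorm :: "real^2^2 \<Rightarrow> real" where
  "mnorm A = onorm (\<lambda>x. A *v x)"

definition shift :: "int \<Rightarrow> (int \<Rightarrow> real) \<Rightarrow> (int \<Rightarrow> real)" where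
  "shift z \<omega> = (\<lambda>n. \<omega> (n + z))"

definition Fn :: "nat \<Rightarrow> (int \<Rightarrow> real) \<Rightarrow> real \<Rightarrow> real" where
  "Fn n \<omega> E = (1 / real n) * ln (mnorm (tmn n E \<omega>))"

definition prodm :: "real measure \<Rightarrow> (int \<Rightarrow> real) measure" where
  "prodm m = PiM (UNIV :: int set) (\<lambda>_. m)"

definition lyap :: "real measure \<Rightarrow> real \<Rightarrow> real" where
  "lyap m E = lim (\<lambda>n. (1 / real n) * integral\<^sup>L (prodm m) (\<lambda>\<omega>. ln (mnorm (tmn n E \<omega>))))"

definition kappa :: "real measure \<Rightarrow> real" where
  "kappa m = 2 + Sup (abs ` msupp m)"

definition SigmaHat :: "real measure \<Rightarrow> real set" where
  "SigmaHat m = {- kappa m .. kappa m}"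

definition Hres :: "(int \<Rightarrow> real) \<Rightarrow> nat \<Rightarrow> real Matrix.mat" where
  "Hres \<omega> N = Matrix.mat N N (\<lambda>(i, j). (if i = j then \<omega> (int i) else 0)
      + (if i = Suc j \<or> j = Suc i then 1 else 0))"

definition spec :: "real Matrix.mat \<Rightarrow> real set" where
  "spec A = {E. eigenvalue A E}"

definition shifted :: "real Matrix.mat \<Rightarrow> real \<Rightarrow> real Matrix.mat" where
  "shifted A E = A - E \<cdot>\<^sub>m 1\<^sub>m (dim_row A)"

definition green :: "(int \<Rightarrow> real) \<Rightarrow> nat \<Rightarrow> real \<Rightarrow> nat \<Rightarrow> nat \<Rightarrow> real" where
  "green \<omega> N E j k = (THE B. B \<in> carrier_mat N N \<and> inverts_mat (shifted (Hres \<omega> N) E) B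
       \<and> inverts_mat B (shifted (Hres \<omega> N) E)) $$ (j, k)"

end

theory Submission
  imports Defs
begin

no_notation Matrix.vec_index (infixl "$" 100)
hide_const (open) Matrix.mat Determinant.det

text \<open>
  Part (1) follows from the averaged hypothesis by submultiplicativity: the transfer matrix of
  length \<open>p\<^sup>3\<close> is a product of \<open>p\<^sup>2\<close> blocks of length \<open>p\<close>, so its exponential growth rate is at
  most the average in the hypothesis, hence at most \<open>L(E) + \<epsilon>\<close>. A general length \<open>N\<close> is rounded
  up to the next cube, and the \<open>p\<^sup>3 - N = O(N\<^sup>2\<^sup>/\<^sup>3)\<close> surplus factors are removed again through
  their uniformly bounded inverses.

  Part (2) is Cramer's rule for the tridiagonal matrix \<open>H - E\<close>: its determinant is a continuant,
  and \<open>G(j,k) det(H - E)\<close> is, up to sign, the product of the continuants of the blocks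
  \<open>[0, min j k)\<close> and \<open>(max j k, n)\<close>, which are entries of the transfer matrices over these blocks.
  Their lengths add up to \<open>n - |j - k| - 1\<close>; long blocks are controlled by part (1), blocks shorter
  than \<open>O(\<epsilon> n)\<close> by the trivial bound.
\<close>

section \<open>Operator norms of 2x2 matrices\<close>

lemma mnorm_nonneg: "0 \<le> mnorm A"
  unfolding mnorm_def by (rule onorm_pos_le) simp

lemma abs_entry_le_mnorm: "\<bar>A $ i $ j\<bar> \<le> mnorm A"
  unfolding mnorm_def by (rule matrix_component_le_onorm)

lemma mnorm_le_sum_abs_entries: "mnorm A \<le> (\<Sum>i\<in>UNIV. \<Sum>j\<in>UNIV. \<bar>A $ i $ j\<bar>)"
  unfolding mnorm_def by (rule onorm_le_matrix_component_sum)

lemma mnorm_mult_le: "mnorm (A ** B) \<le> mnorm A * mnorm B"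
proof -
  have "(\<lambda>x. (A ** B) *v x) = (\<lambda>x. A *v x) \<circ> (\<lambda>x. B *v x)"
    by (auto simp: matrix_vector_mul_assoc)
  thus ?thesis unfolding mnorm_def by (metis onorm_compose matrix_vector_mul_bounded_linear)
qed

lemma mnorm_mat_one_le: "mnorm (mat 1) \<le> 1"
proof -
  have "(*v) (mat 1) = (\<lambda>x::real^2. x)" by (rule ext) simp
  then show ?thesis unfolding mnorm_def by (simp only: onorm_id_le)
qed

lemma mnorm_ge_half_if_det_one:
  fixes A :: "real^2^2"
  assumes "det A = 1"
  shows "1/2 \<le> mnorm A"
proof -
  define m where "m = mnorm A"
  have "\<bar>A$i$j\<bar> \<le> m" for i j unfolding m_def by (rule abs_entry_le_mnorm)
  then have "\<bar>A$1$1\<bar> * \<bar>A$2$2\<bar> \<le> m * m" "\<bar>A$1$2\<bar> * \<bar>A$2$1\<bar> \<le> m * m"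
    by (simp_all add: mult_mono')
  moreover have "1 \<le> \<bar>A$1$1\<bar> * \<bar>A$2$2\<bar> + \<bar>A$1$2\<bar> * \<bar>A$2$1\<bar>"
    using assms abs_triangle_ineq4[of "A$1$1 * A$2$2" "A$1$2 * A$2$1"] by (simp add: det_2 abs_mult)
  moreover have "0 \<le> m" unfolding m_def by (rule mnorm_nonneg)
  ultimately have "(1/2)\<^sup>2 \<le> m\<^sup>2" by (simp add: power2_eq_square)
  from power2_le_imp_le[OF this \<open>0 \<le> m\<close>] show ?thesis unfolding m_def .
qed

section \<open>Transfer matrices\<close>

lemma tm_entries [simp]:
  "tm E a $ 1 $ 1 = E - a" "tm E a $ 1 $ 2 = -1" "tm E a $ 2 $ 1 = 1" "tm E a $ 2 $ 2 = 0"
  by (simp_all add: tm_def)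

lemma matrix_mult_2x2_entry: "((A::real^2^2) ** B) $ i $ j = A$i$1 * B$1$j + A$i$2 * B$2$j"
  by (simp add: matrix_matrix_mult_def sum_2)

lemma shift_shift [simp]: "shift a (shift b w) = shift (b + a) w"
  by (simp add: shift_def fun_eq_iff ac_simps)

lemma tmn_add: "tmn (a + b) E w = tmn b E (shift (int a) w) ** tmn a E w"
proof (induction b)
  case (Suc b)
  have "tmn (a + Suc b) E w = tm E (w (int (a + b))) ** tmn (a + b) E w" by simp
  also have "\<dots> = tm E (shift (int a) w (int b)) ** (tmn b E (shift (int a) w) ** tmn a E w)"
    using Suc by (simp add: shift_def add.commute)
  finally show ?case by (simp add: matrix_mul_assoc)
qed simp

lemma det_tmn: "det (tmn n E w) = 1"
proof (induction n)
  case (Suc n)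
  have "det (tm E a) = 1" for a by (simp add: det_2)
  with Suc show ?case by (simp add: Determinants.det_mul)
qed simp

lemma mnorm_tmn_ge_half: "1/2 \<le> mnorm (tmn n E w)"
  by (rule mnorm_ge_half_if_det_one[OF det_tmn])

lemma mnorm_tmn_pos: "0 < mnorm (tmn n E w)"
  using mnorm_tmn_ge_half[of n E w] by linarith

lemma mnorm_tm_le: "mnorm (tm E a) \<le> \<bar>E - a\<bar> + 2"
  using mnorm_le_sum_abs_entries[of "tm E a"] by (simp add: sum_2)

definition tm_inv :: "real \<Rightarrow> real \<Rightarrow> real^2^2" where
  "tm_inv E a = vector [vector [0, 1], vector [-1, E - a]]"

fun tmn_inv :: "nat \<Rightarrow> real \<Rightarrow> (int \<Rightarrow> real) \<Rightarrow> real^2^2" where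
  "tmn_inv 0 E w = mat 1"
| "tmn_inv (Suc n) E w = tmn_inv n E w ** tm_inv E (w (int n))"

lemma tm_inv_tm: "tm_inv E a ** tm E a = mat 1"
  by (simp add: tm_inv_def Finite_Cartesian_Product.vec_eq_iff forall_2 matrix_mult_2x2_entry
      Finite_Cartesian_Product.mat_def)

lemma tmn_inv_tmn: "tmn_inv n E w ** tmn n E w = mat 1"
proof (induction n)
  case (Suc n)
  have "tmn_inv (Suc n) E w ** tmn (Suc n) E w
      = tmn_inv n E w ** ((tm_inv E (w (int n)) ** tm E (w (int n))) ** tmn n E w)"
    by (simp add: matrix_mul_assoc)
  then show ?case using Suc by (simp add: tm_inv_tm)
qed simp

lemma mnorm_tm_inv_le: "mnorm (tm_inv E a) \<le> \<bar>E - a\<bar> + 2"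
  using mnorm_le_sum_abs_entries[of "tm_inv E a"] by (simp add: tm_inv_def sum_2)

lemma mnorm_tmn_le:
  assumes "\<And>t. \<bar>E - w t\<bar> \<le> b"
  shows "mnorm (tmn n E w) \<le> (b + 2) ^ n"
proof (induction n)
  case 0 then show ?case using mnorm_mat_one_le by simp
next
  case (Suc n)
  have "mnorm (tmn (Suc n) E w) \<le> mnorm (tm E (w (int n))) * mnorm (tmn n E w)"
    by (simp add: mnorm_mult_le)
  also have "\<dots> \<le> (b + 2) * (b + 2) ^ n"
    using Suc mnorm_tm_le[of E "w (int n)"] assms[of "int n"] mnorm_nonneg
    by (intro mult_mono) auto
  finally show ?case by simp
qed

lemma mnorm_tmn_inv_le:
  assumes "\<And>t. \<bar>E - w t\<bar> \<le> b"
  shows "mnorm (tmn_inv n E w) \<le> (b + 2) ^ n"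
proof (induction n)
  case 0 then show ?case using mnorm_mat_one_le by simp
next
  case (Suc n)
  have "mnorm (tmn_inv (Suc n) E w) \<le> mnorm (tmn_inv n E w) * mnorm (tm_inv E (w (int n)))"
    by (simp add: mnorm_mult_le)
  also have "\<dots> \<le> (b + 2) ^ n * (b + 2)"
    using Suc mnorm_tm_inv_le[of E "w (int n)"] assms[of "int n"] mnorm_nonneg
    by (intro mult_mono) auto
  finally show ?case by (simp add: mult.commute)
qed

section \<open>Continuants\<close>

fun continuant :: "(nat \<Rightarrow> real) \<Rightarrow> nat \<Rightarrow> real" where
  "continuant d 0 = 1"
| "continuant d (Suc 0) = d 0"
| "continuant d (Suc (Suc n)) = d (Suc n) * continuant d (Suc n) - continuant d n"

lemma continuant_Suc:
  "continuant d (Suc j) = d j * continuant d j - (if j = 0 then 0 else continuant d (j - 1))"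
  by (cases j) auto

lemma continuant_expand_first:
  "continuant d (Suc (Suc m)) =
     d 0 * continuant (\<lambda>t. d (Suc t)) (Suc m) - continuant (\<lambda>t. d (Suc (Suc t))) m"
proof (induction m rule: less_induct)
  case (less m)
  consider "m = 0" | "m = 1" | k where "m = Suc (Suc k)"
    by (metis One_nat_def not0_implies_Suc)
  then show ?case
  proof cases
    case 3
    have "continuant d (Suc (Suc (Suc k))) =
        d 0 * continuant (\<lambda>t. d (Suc t)) (Suc (Suc k)) - continuant (\<lambda>t. d (Suc (Suc t))) (Suc k)"
      "continuant d (Suc (Suc k)) =
        d 0 * continuant (\<lambda>t. d (Suc t)) (Suc k) - continuant (\<lambda>t. d (Suc (Suc t))) k"
      using less[of "Suc k"] less[of k] 3 by simp_all
    note expand = this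
    have "continuant d (Suc (Suc m))
        = d (Suc m) * continuant d (Suc (Suc (Suc k))) - continuant d (Suc (Suc k))"
      using 3 by simp
    also have "\<dots> = d 0 * continuant (\<lambda>t. d (Suc t)) (Suc m) - continuant (\<lambda>t. d (Suc (Suc t))) m"
      unfolding expand using 3 by (simp add: algebra_simps)
    finally show ?thesis .
  qed (simp_all add: algebra_simps)
qed

definition continuant_tail :: "(nat \<Rightarrow> real) \<Rightarrow> nat \<Rightarrow> nat \<Rightarrow> real" where
  "continuant_tail d n i = continuant (\<lambda>t. d (t + i)) (n - i)"

lemma continuant_tail_self [simp]: "continuant_tail d n n = 1"
  by (simp add: continuant_tail_def)

lemma continuant_tail_rec:
  assumes "i < n"
  shows "continuant_tail d n i =
    d i * continuant_tail d n (Suc i) - (if Suc i < n then continuant_tail d n (Suc (Suc i)) else 0)"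
proof (cases "Suc i < n")
  case True
  then obtain m where m: "n - i = Suc (Suc m)"
    by (metis Suc_diff_Suc Suc_lessD less_imp_Suc_add add_diff_cancel_left')
  then have "n - Suc i = Suc m" "n - Suc (Suc i) = m" by auto
  with m True show ?thesis
    unfolding continuant_tail_def m continuant_expand_first by (simp add: ac_simps)
next
  case False
  with assms have "n - i = Suc 0" "n - Suc i = 0" by auto
  with False show ?thesis unfolding continuant_tail_def by simp
qed

text \<open>Expansion of \<open>continuant d n\<close> across the cut between positions \<open>k\<close> and \<open>k + 1\<close>.\<close>
lemma continuant_split:
  assumes "k < n"
  shows "continuant d (Suc k) * continuant_tail d n (Suc k)
    - (if Suc k < n then continuant d k * continuant_tail d n (Suc (Suc k)) else 0) = continuant d n"
proof -
  from assms have "k \<le> n - 1" by simp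
  then show ?thesis
  proof (induction k rule: inc_induct)
    case base
    with assms show ?case by (simp add: Suc_diff_1)
  next
    case (step k)
    then have "Suc k < n" by simp
    with step.IH show ?case
      by (cases "Suc (Suc k) < n") (simp_all add: continuant_tail_rec algebra_simps)
  qed
qed

lemma tmn_entries_continuant:
  "tmn n E w $ 1 $ 1 = (-1)^n * continuant (\<lambda>t. w (int t) - E) n \<and>
   tmn n E w $ 2 $ 1 = (if n = 0 then 0 else (-1)^(n-1) * continuant (\<lambda>t. w (int t) - E) (n-1))"
proof (induction n)
  case (Suc n)
  show ?case
  proof (cases n)
    case (Suc k)
    have "tmn (Suc k) E w $ 1 $ 1 = (-1)^(Suc k) * continuant (\<lambda>t. w (int t) - E) (Suc k)"
      "tmn (Suc k) E w $ 2 $ 1 = (-1)^k * continuant (\<lambda>t. w (int t) - E) k"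
      using Suc.IH unfolding Suc by auto
    then show ?thesis
      unfolding Suc tmn.simps(2)[of "Suc k"] matrix_mult_2x2_entry tm_entries
      by (simp add: algebra_simps)
  qed (simp add: matrix_mult_2x2_entry Finite_Cartesian_Product.mat_def)
qed (simp add: Finite_Cartesian_Product.mat_def)

lemma abs_continuant_le_mnorm_tmn: "\<bar>continuant (\<lambda>t. w (int t) - E) n\<bar> \<le> mnorm (tmn n E w)"
  using abs_entry_le_mnorm[of "tmn n E w" 1 1] tmn_entries_continuant[of n E w]
  by (simp add: abs_mult)

section \<open>The finite-volume operator and its Green's function\<close>

abbreviation Hres_minus :: "(int \<Rightarrow> real) \<Rightarrow> nat \<Rightarrow> real \<Rightarrow> real Matrix.mat" where
  "Hres_minus w n E \<equiv> shifted (Hres w n) E"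

lemma Hres_minus_carrier: "Hres_minus w n E \<in> carrier_mat n n"
  unfolding shifted_def Hres_def by (rule minus_carrier_mat) auto

lemma Hres_minus_dims [simp]: "dim_row (Hres_minus w n E) = n" "dim_col (Hres_minus w n E) = n"
  using Hres_minus_carrier[of w n E] by auto

lemma Hres_minus_index:
  "i < n \<Longrightarrow> j < n \<Longrightarrow> Hres_minus w n E $$ (i, j) =
     (if i = j then w (int i) - E else 0) + (if i = Suc j \<or> j = Suc i then 1 else 0)"
  by (simp add: shifted_def Hres_def)

lemma mat_delete_Hres_minus_last:
  "mat_delete (Hres_minus w (Suc n) E) n n = Hres_minus w n E"
  by (rule eq_matI) (auto simp: mat_delete_def Hres_minus_index shifted_def Hres_def)

lemma det_Hres_minus_recurrence:
  "Determinant.det (Hres_minus w (Suc (Suc k)) E) =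
     (w (int (Suc k)) - E) * Determinant.det (Hres_minus w (Suc k) E) - Determinant.det (Hres_minus w k E)"
proof -
  define A where "A = Hres_minus w (Suc (Suc k)) E"
  have A: "A \<in> carrier_mat (Suc (Suc k)) (Suc (Suc k))" unfolding A_def by (rule Hres_minus_carrier)
  have "Determinant.det A = (\<Sum>j<Suc (Suc k). A $$ (Suc k, j) * cofactor A (Suc k) j)"
    by (rule laplace_expansion_row[OF A]) simp
  also have "\<dots> = cofactor A (Suc k) k + (w (int (Suc k)) - E) * cofactor A (Suc k) (Suc k)"
    by (simp add: A_def Hres_minus_index)
  also have "cofactor A (Suc k) (Suc k) = Determinant.det (Hres_minus w (Suc k) E)"
    unfolding cofactor_def A_def mat_delete_Hres_minus_last by simp
  also have "cofactor A (Suc k) k = - Determinant.det (Hres_minus w k E)"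
  proof -
    define M where "M = mat_delete A (Suc k) k"
    have M: "M \<in> carrier_mat (Suc k) (Suc k)" unfolding M_def using mat_delete_carrier[OF A] by simp
    \<comment> \<open>the last column of \<open>M\<close> has a single nonzero entry, a \<open>1\<close> on the diagonal\<close>
    have "Determinant.det M = (\<Sum>i<Suc k. M $$ (i, k) * cofactor M i k)"
      by (rule laplace_expansion_column[OF M]) simp
    also have "\<dots> = (\<Sum>i<Suc k. if i = k then cofactor M i k else 0)"
      by (rule sum.cong) (auto simp: M_def A_def mat_delete_def Hres_minus_index)
    also have "\<dots> = cofactor M k k" by simp
    also have "mat_delete M k k = Hres_minus w k E"
      by (rule eq_matI) (auto simp: M_def A_def mat_delete_def Hres_minus_index shifted_def Hres_def)
    then have "cofactor M k k = Determinant.det (Hres_minus w k E)"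
      unfolding cofactor_def by simp
    finally show ?thesis unfolding cofactor_def M_def by simp
  qed
  finally show ?thesis unfolding A_def by (simp add: algebra_simps)
qed

lemma det_Hres_minus: "Determinant.det (Hres_minus w n E) = continuant (\<lambda>t. w (int t) - E) n"
proof (induction n rule: less_induct)
  case (less n)
  consider "n = 0" | "n = 1" | k where "n = Suc (Suc k)"
    by (metis One_nat_def not0_implies_Suc)
  then show ?case
  proof cases
    case 1
    then show ?thesis using det_dim_zero[OF Hres_minus_carrier] by simp
  next
    case 2
    have "Determinant.det (Hres_minus w 1 E) = Hres_minus w 1 E $$ (0, 0) * cofactor (Hres_minus w 1 E) 0 0"
      using laplace_expansion_row[OF Hres_minus_carrier[of w 1 E], of 0] by simp
    also have "cofactor (Hres_minus w 1 E) 0 0 = 1"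
      unfolding cofactor_def using mat_delete_Hres_minus_last[of w 0 E] det_dim_zero[OF Hres_minus_carrier]
      by simp
    finally show ?thesis using 2 by (simp add: Hres_minus_index)
  next
    case 3
    with less[of k] less[of "Suc k"] show ?thesis by (simp add: det_Hres_minus_recurrence)
  qed
qed

lemma det_Hres_minus_nonzero:
  assumes "E \<notin> spec (Hres w n)"
  shows "Determinant.det (Hres_minus w n E) \<noteq> 0"
proof -
  have H: "Hres w n \<in> carrier_mat n n" by (simp add: Hres_def)
  have "char_matrix (Hres w n) E = Hres_minus w n E"
    by (rule eq_matI) (auto simp: char_matrix_def shifted_def Hres_def)
  with assms eigenvalue_det[OF H, of E] show ?thesis unfolding spec_def by auto
qed

definition green_entry :: "(nat \<Rightarrow> real) \<Rightarrow> nat \<Rightarrow> nat \<Rightarrow> nat \<Rightarrow> real" where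
  "green_entry d n j k =
     (-1)^(j + k) * continuant d (min j k) * continuant_tail d n (Suc (max j k)) / continuant d n"

lemma green_entry_column_equation:
  assumes i: "i < n" and k: "k < n" and nz: "continuant d n \<noteq> 0"
  shows "(if 0 < i then green_entry d n (i - 1) k else 0) + d i * green_entry d n i k
     + (if Suc i < n then green_entry d n (Suc i) k else 0) = (if i = k then 1 else 0)"
proof -
  note simps = green_entry_def min_def max_def power_add algebra_simps add_divide_distrib diff_divide_distrib
  consider "i < k" | "i = k" | "k < i" by linarith
  then show ?thesis
  proof cases
    case 1
    then show ?thesis
    proof (cases i)
      case (Suc i')
      have "continuant d (Suc (Suc i')) = d (Suc i') * continuant d (Suc i') - continuant d i'" by simp
      with 1 k show ?thesis unfolding Suc by (simp add: simps)
    qed (use k in \<open>simp add: simps\<close>)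
  next
    case 2
    have "(if 0 < k then green_entry d n (k - 1) k else 0) + d k * green_entry d n k k
        + (if Suc k < n then green_entry d n (Suc k) k else 0)
      = (continuant d (Suc k) * continuant_tail d n (Suc k)
          - (if Suc k < n then continuant d k * continuant_tail d n (Suc (Suc k)) else 0)) / continuant d n"
      using continuant_Suc[of d k] by (cases k) (simp_all add: simps)
    also have "\<dots> = 1" using continuant_split[OF k] nz by simp
    finally show ?thesis using 2 by (simp only: simp_thms if_True)
  next
    case 3
    then obtain i' where i': "i = Suc i'" and "k \<le> i'" by (cases i) auto
    have tail: "continuant_tail d n (Suc i') = d (Suc i') * continuant_tail d n (Suc (Suc i'))
        - (if Suc (Suc i') < n then continuant_tail d n (Suc (Suc (Suc i'))) else 0)"
      using i i' by (intro continuant_tail_rec) auto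
    from \<open>k \<le> i'\<close> i show ?thesis unfolding i' by (simp add: simps tail)
  qed
qed

lemma Hres_minus_row_sum:
  assumes i: "i < n"
  shows "(\<Sum>l<n. Hres_minus w n E $$ (i, l) * f l) =
    (if 0 < i then f (i - 1) else 0) + (w (int i) - E) * f i + (if Suc i < n then f (Suc i) else 0)"
proof -
  have "(\<Sum>l<n. Hres_minus w n E $$ (i, l) * f l) =
     (\<Sum>l<n. if l = i then (w (int i) - E) * f l else 0) + (\<Sum>l<n. if Suc l = i then f l else 0)
         + (\<Sum>l<n. if l = Suc i then f l else 0)"
    unfolding sum.distrib[symmetric] by (rule sum.cong) (auto simp: Hres_minus_index i)
  also have "(\<Sum>l<n. if Suc l = i then f l else 0) = (if 0 < i then f (i - 1) else 0)"
    using i by (cases i) (simp_all add: sum.delta)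
  finally show ?thesis using i by (simp add: sum.delta)
qed

lemma green_eq_green_entry:
  assumes "E \<notin> spec (Hres w n)" and "j < n" and "k < n"
  shows "green w n E j k = green_entry (\<lambda>t. w (int t) - E) n j k"
proof -
  define d where "d = (\<lambda>t. w (int t) - E)"
  define G where "G = Matrix.mat n n (\<lambda>(j, k). green_entry d n j k)"
  have A: "Hres_minus w n E \<in> carrier_mat n n" by (rule Hres_minus_carrier)
  have G: "G \<in> carrier_mat n n" by (simp add: G_def)
  have nz: "continuant d n \<noteq> 0"
    using det_Hres_minus_nonzero[OF assms(1)] unfolding det_Hres_minus d_def .
  have AG: "Hres_minus w n E * G = 1\<^sub>m n"
  proof (rule eq_matI)
    fix i k assume "i < dim_row (1\<^sub>m n :: real Matrix.mat)" "k < dim_col (1\<^sub>m n :: real Matrix.mat)"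
    then have i: "i < n" and k: "k < n" by auto
    have "(Hres_minus w n E * G) $$ (i, k) = (\<Sum>l<n. Hres_minus w n E $$ (i, l) * green_entry d n l k)"
      using i k by (simp add: G_def scalar_prod_def atLeast0LessThan)
    also have "\<dots> = (if i = k then 1 else 0)"
      unfolding Hres_minus_row_sum[OF i] using green_entry_column_equation[OF i k nz]
      by (simp add: d_def)
    finally show "(Hres_minus w n E * G) $$ (i, k) = 1\<^sub>m n $$ (i, k)" using i k by simp
  qed (simp_all add: G_def)
  have GA: "G * Hres_minus w n E = 1\<^sub>m n" by (rule mat_mult_left_right_inverse[OF A G AG])
  have "(THE B. B \<in> carrier_mat n n \<and> inverts_mat (Hres_minus w n E) B \<and> inverts_mat B (Hres_minus w n E)) = G"
  proof (rule the_equality)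
    fix B assume "B \<in> carrier_mat n n \<and> inverts_mat (Hres_minus w n E) B \<and> inverts_mat B (Hres_minus w n E)"
    then have B: "B \<in> carrier_mat n n" and BA: "B * Hres_minus w n E = 1\<^sub>m n"
      unfolding inverts_mat_def by auto
    have "B = B * (Hres_minus w n E * G)" using B AG by simp
    also have "\<dots> = G" using B BA G by (simp add: assoc_mult_mat[OF B A G, symmetric])
    finally show "B = G" .
  qed (use G AG GA in \<open>auto simp: inverts_mat_def\<close>)
  with assms(2,3) show ?thesis unfolding green_def G_def d_def by simp
qed

lemma continuant_tail_eq_shift:
  "continuant_tail (\<lambda>t. w (int t) - E) n s = continuant (\<lambda>t. shift (int s) w (int t) - E) (n - s)"
  unfolding continuant_tail_def shift_def by simp

lemma abs_green_mult_abs_det_le: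
  assumes "E \<notin> spec (Hres w n)" and "j < n" and "k < n"
  shows "\<bar>green w n E j k\<bar> * \<bar>Determinant.det (Hres_minus w n E)\<bar>
    \<le> mnorm (tmn (min j k) E w) * mnorm (tmn (n - Suc (max j k)) E (shift (int (Suc (max j k))) w))"
proof -
  define d where "d = (\<lambda>t. w (int t) - E)"
  have nz: "continuant d n \<noteq> 0"
    using det_Hres_minus_nonzero[OF assms(1)] unfolding det_Hres_minus d_def .
  have "\<bar>green w n E j k\<bar> * \<bar>Determinant.det (Hres_minus w n E)\<bar>
      = \<bar>continuant d (min j k)\<bar> * \<bar>continuant_tail d n (Suc (max j k))\<bar>"
    unfolding green_eq_green_entry[OF assms] det_Hres_minus d_def[symmetric] using nz
    by (simp add: green_entry_def abs_mult)
  also have "\<dots> \<le> mnorm (tmn (min j k) E w) * mnorm (tmn (n - Suc (max j k)) E (shift (int (Suc (max j k))) w))"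
    unfolding d_def continuant_tail_eq_shift
    by (intro mult_mono abs_continuant_le_mnorm_tmn) (simp_all add: mnorm_nonneg)
  finally show ?thesis .
qed

section \<open>Upper bounds on the growth of transfer matrices\<close>

lemma ln_mnorm_tmn_ge: "- 1 \<le> ln (mnorm (tmn n E w))"
proof -
  have "- 1 \<le> - ln (2::real)" using ln_2_less_1 by simp
  also have "\<dots> = ln (1/2)" by (simp add: ln_div)
  also have "\<dots> \<le> ln (mnorm (tmn n E w))"
    using mnorm_tmn_ge_half[of n E w] by (simp add: ln_le_cancel_iff mnorm_tmn_pos)
  finally show ?thesis .
qed

lemma ln_mnorm_tmn_le:
  assumes "\<And>t. \<bar>E - w t\<bar> \<le> b" and "0 \<le> b"
  shows "ln (mnorm (tmn n E w)) \<le> real n * ln (b + 2)"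
proof -
  have "ln (mnorm (tmn n E w)) \<le> ln ((b + 2) ^ n)"
    using mnorm_tmn_le[OF assms(1)] mnorm_tmn_pos assms(2) by simp
  also have "\<dots> = real n * ln (b + 2)" using assms(2) by (simp add: ln_realpow)
  finally show ?thesis .
qed

lemma Fn_bounds:
  assumes "\<And>t. \<bar>E - w t\<bar> \<le> b" and "0 \<le> b" and "1 \<le> q"
  shows "- 1 \<le> Fn q w E" and "Fn q w E \<le> ln (b + 2)"
proof -
  have q: "1 \<le> real q" using assms(3) by simp
  have "- 1 \<le> - 1 / real q" using q by (simp add: field_simps)
  also have "\<dots> \<le> ln (mnorm (tmn q E w)) / real q"
    using ln_mnorm_tmn_ge q by (intro divide_right_mono) auto
  finally show "- 1 \<le> Fn q w E" unfolding Fn_def by simp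
  show "Fn q w E \<le> ln (b + 2)"
    using ln_mnorm_tmn_le[OF assms(1,2), of q] q by (simp add: Fn_def field_simps)
qed

lemma ln_mnorm_tmn_subadditive:
  "ln (mnorm (tmn (q * p) E w)) \<le> (\<Sum>s<q. ln (mnorm (tmn p E (shift (int s * int p) w))))"
proof (induction q)
  case 0
  then show ?case using mnorm_mat_one_le mnorm_tmn_pos[of 0 E w] by simp
next
  case (Suc q)
  have "tmn (Suc q * p) E w = tmn p E (shift (int (q * p)) w) ** tmn (q * p) E w"
    using tmn_add[of "q * p" p E w] by (simp add: add.commute)
  then have "mnorm (tmn (Suc q * p) E w) \<le> mnorm (tmn p E (shift (int (q * p)) w)) * mnorm (tmn (q * p) E w)"
    by (simp only: mnorm_mult_le)
  then have "ln (mnorm (tmn (Suc q * p) E w))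
      \<le> ln (mnorm (tmn p E (shift (int (q * p)) w)) * mnorm (tmn (q * p) E w))"
    by (simp add: ln_le_cancel_iff mnorm_tmn_pos)
  also have "\<dots> = ln (mnorm (tmn p E (shift (int (q * p)) w))) + ln (mnorm (tmn (q * p) E w))"
    by (rule ln_mult_pos[OF mnorm_tmn_pos mnorm_tmn_pos])
  finally show ?case using Suc by (simp add: add.commute)
qed

definition uniform_average_approx ::
    "(real \<Rightarrow> real) \<Rightarrow> real set \<Rightarrow> (int \<Rightarrow> real) \<Rightarrow> real \<Rightarrow> nat \<Rightarrow> bool" where
  "uniform_average_approx L S \<omega> \<epsilon> n0 \<longleftrightarrow> (\<forall>(n :: nat) (z :: int) E.
     real n \<ge> max (real n0) ((ln (\<bar>z\<bar> + 1)) powr (2/3)) \<and> E \<in> S \<longrightarrow>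
     \<bar>L E - (1 / (real n)^2) * (\<Sum>s<n^2. Fn n (shift (z + int s * int n) \<omega>) E)\<bar> < \<epsilon>)"

lemma lyap_bounds_from_average_approx:
  assumes avg: "uniform_average_approx L S \<omega> \<epsilon> n0" and "\<epsilon> < 1" and E: "E \<in> S"
    and bnd: "\<And>t. \<bar>E - \<omega> t\<bar> \<le> b" and b: "0 \<le> b"
  shows "- 2 < L E" and "L E < ln (b + 2) + 1"
proof -
  define q where "q = max n0 1"
  define f where "f s = Fn q (shift (int s * int q) \<omega>) E" for s
  have q: "1 \<le> q" unfolding q_def by simp
  have "real q \<ge> max (real n0) ((ln (\<bar>0::int\<bar> + 1)) powr (2/3))" by (simp add: q_def)
  with avg E have "\<bar>L E - (1 / (real q)^2) * (\<Sum>s<q^2. Fn q (shift (0 + int s * int q) \<omega>) E)\<bar> < \<epsilon>"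
    unfolding uniform_average_approx_def by blast
  then have "\<bar>L E - (1 / (real q)^2) * (\<Sum>s<q^2. f s)\<bar> < \<epsilon>" by (simp add: f_def)
  moreover have "- 1 \<le> f s" "f s \<le> ln (b + 2)" for s
    unfolding f_def using Fn_bounds[OF _ b q] bnd by (auto simp: shift_def)
  then have "- (real q^2) \<le> (\<Sum>s<q^2. f s)" "(\<Sum>s<q^2. f s) \<le> real q^2 * ln (b + 2)"
    using sum_bounded_below[of "{..<q^2}" "-1" f] sum_bounded_above[of "{..<q^2}" f "ln (b + 2)"]
    by auto
  then have "- 1 \<le> (1 / (real q)^2) * (\<Sum>s<q^2. f s)" "(1 / (real q)^2) * (\<Sum>s<q^2. f s) \<le> ln (b + 2)"
    using q by (simp_all add: field_simps)
  ultimately show "- 2 < L E" "L E < ln (b + 2) + 1" using \<open>\<epsilon> < 1\<close> by linarith+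
qed

lemma ln_mnorm_tmn_cube_le:
  fixes z :: int
  assumes avg: "uniform_average_approx L S \<omega> \<epsilon> n0" and E: "E \<in> S" and p: "1 \<le> p"
    and "n0 \<le> p" and "(ln (\<bar>z\<bar> + 1)) powr (2/3) \<le> real p"
  shows "ln (mnorm (tmn (p^3) E (shift z \<omega>))) \<le> real p ^ 3 * (L E + \<epsilon>)"
proof -
  define avg_p where "avg_p = (1 / (real p)^2) * (\<Sum>s<p^2. Fn p (shift (z + int s * int p) \<omega>) E)"
  have "\<bar>L E - avg_p\<bar> < \<epsilon>"
    using avg assms(4,5) E unfolding uniform_average_approx_def avg_p_def by auto
  have "ln (mnorm (tmn (p^2 * p) E (shift z \<omega>)))
      \<le> (\<Sum>s<p^2. ln (mnorm (tmn p E (shift (int s * int p) (shift z \<omega>)))))"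
    by (rule ln_mnorm_tmn_subadditive)
  also have "\<dots> = real p * (\<Sum>s<p^2. Fn p (shift (z + int s * int p) \<omega>) E)"
    using p by (simp add: Fn_def sum_distrib_left)
  also have "\<dots> = real p ^ 3 * avg_p"
    using p by (simp add: avg_p_def power3_eq_cube power2_eq_square)
  also have "\<dots> \<le> real p ^ 3 * (L E + \<epsilon>)"
    using \<open>\<bar>L E - avg_p\<bar> < \<epsilon>\<close> by (intro mult_left_mono) auto
  finally show ?thesis by (simp add: power2_eq_square power3_eq_cube)
qed

lemma ln_mnorm_tmn_le_longer:
  assumes bnd: "\<And>t. \<bar>E - w t\<bar> \<le> b" and b: "0 \<le> b" and "N \<le> K"
  shows "ln (mnorm (tmn N E w)) \<le> real (K - N) * ln (b + 2) + ln (mnorm (tmn K E w))"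
proof -
  define r where "r = K - N"
  have "tmn K E w = tmn r E (shift (int N) w) ** tmn N E w"
    using tmn_add[of N r E w] \<open>N \<le> K\<close> by (simp add: r_def)
  then have "tmn N E w = tmn_inv r E (shift (int N) w) ** tmn K E w"
    by (simp add: matrix_mul_assoc tmn_inv_tmn)
  then have "mnorm (tmn N E w) \<le> mnorm (tmn_inv r E (shift (int N) w)) * mnorm (tmn K E w)"
    by (simp only: mnorm_mult_le)
  also have "\<dots> \<le> (b + 2) ^ r * mnorm (tmn K E w)"
    using mnorm_tmn_inv_le[of E "shift (int N) w" b r] bnd mnorm_nonneg
    by (intro mult_right_mono) (auto simp: shift_def)
  finally have "ln (mnorm (tmn N E w)) \<le> ln ((b + 2) ^ r * mnorm (tmn K E w))"
    using b by (simp add: ln_le_cancel_iff mnorm_tmn_pos)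
  also have "\<dots> = real r * ln (b + 2) + ln (mnorm (tmn K E w))"
    using b by (simp add: ln_mult_pos mnorm_tmn_pos ln_realpow)
  finally show ?thesis unfolding r_def .
qed

lemma obtain_cube_root_ceiling:
  fixes N :: nat
  assumes "1 \<le> N"
  obtains p where "1 \<le> p" and "N \<le> p^3" and "(real p - 1)^3 < real N"
proof
  define p where "p = (LEAST p. N \<le> p^3)"
  have "N \<le> N^3" using assms by (simp add: self_le_power)
  then show "N \<le> p^3" unfolding p_def by (rule LeastI)
  then show "1 \<le> p" using assms by (cases p) auto
  then have "\<not> N \<le> (p - 1)^3" unfolding p_def by (intro not_less_Least) (simp add: p_def)
  then have "real ((p - 1)^3) < real N" by simp
  moreover have "real (p - 1) = real p - 1" using \<open>1 \<le> p\<close> by (simp add: of_nat_diff)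
  ultimately show "(real p - 1)^3 < real N" by (simp only: of_nat_power)
qed

lemma cube_excess_le:
  fixes p N \<Lambda> \<epsilon> :: real
  assumes p: "2 \<le> p" "(p - 1)^3 < N" and "0 \<le> \<Lambda>" and "0 < \<epsilon>" and "48 * (\<Lambda> + 1) \<le> \<epsilon> * p"
  shows "(p^3 - N) * (2 * \<Lambda> + 2) \<le> \<epsilon> * N"
proof -
  have "p^3 - N < p^3 - (p - 1)^3" using p(2) by simp
  also have "\<dots> = 3 * p^2 - 3 * p + 1" by (simp add: power3_eq_cube power2_eq_square algebra_simps)
  finally have excess: "p^3 - N \<le> 3 * p^2" using p(1) by simp
  have "p^3 \<le> (2 * (p - 1))^3" using p(1) by (intro power_mono) auto
  also have "\<dots> = 8 * (p - 1)^3" by (simp only: power_mult_distrib) simp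
  finally have cube: "p^3 \<le> 8 * N" using p(2) by simp
  have "(p^3 - N) * (2 * \<Lambda> + 2) \<le> 3 * p^2 * (2 * \<Lambda> + 2)"
    using excess \<open>0 \<le> \<Lambda>\<close> by (intro mult_right_mono) auto
  also have "\<dots> = p^2 * (48 * (\<Lambda> + 1)) / 8" by (simp add: algebra_simps)
  also have "\<dots> \<le> p^2 * (\<epsilon> * p) / 8" using assms(5) by (intro divide_right_mono mult_left_mono) auto
  also have "\<dots> = \<epsilon> * p^3 / 8" by (simp add: power3_eq_cube power2_eq_square algebra_simps)
  also have "\<dots> \<le> \<epsilon> * N" using cube \<open>0 < \<epsilon>\<close> by (simp add: field_simps)
  finally show ?thesis .
qed

lemma powr_two_thirds_le:
  fixes x :: real
  assumes "0 \<le> x" and "x^2 \<le> p^3" and "0 \<le> p"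
  shows "x powr (2/3) \<le> p"
proof -
  have "(x powr (2/3))^3 = x^2"
  proof (cases "x = 0")
    case False
    with assms(1) have "0 < x" by simp
    then have "(x powr (2/3))^3 = (x powr (2/3)) powr (real 3)" by (simp add: powr_realpow)
    also have "\<dots> = x powr (real 2)" by (simp add: powr_powr)
    also have "\<dots> = x^2" using \<open>0 < x\<close> by (rule powr_realpow)
    finally show ?thesis .
  qed simp
  with assms(2) have "(x powr (2/3))^3 \<le> p^3" by simp
  then show ?thesis using power_mono_iff[of "x powr (2/3)" p 3] assms(3) by simp
qed

text \<open>
  Round \<open>N\<close> up to a cube \<open>p\<^sup>3\<close>: the product of length \<open>p\<^sup>3\<close> splits into \<open>p\<^sup>2\<close> blocks of
  length \<open>p\<close>, to which the averaged hypothesis applies, and the excess \<open>p\<^sup>3 - N = O(p\<^sup>2)\<close>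
  costs only \<open>O(p\<^sup>2)\<close>, which is \<open>\<le> \<epsilon> N\<close> once \<open>p\<close> is large.
\<close>
lemma transfer_growth_le:
  fixes z :: int
  assumes bnd: "\<And>t. \<bar>E - \<omega> t\<bar> \<le> b" and b: "0 \<le> b" and \<epsilon>: "0 < \<epsilon>" "\<epsilon> < 1"
    and avg: "uniform_average_approx L S \<omega> \<epsilon> n0" and E: "E \<in> S"
    and N: "n0^3 \<le> N" "P0^3 \<le> N" "2 \<le> P0" "48 * (ln (b + 2) + 1) / \<epsilon> \<le> real P0"
    and Nz: "(ln (\<bar>z\<bar> + 1))^2 \<le> real N"
  shows "(1 / real N) * ln (mnorm (tmn N E (shift z \<omega>))) \<le> L E + 2 * \<epsilon>"
proof -
  define \<Lambda> where "\<Lambda> = ln (b + 2)"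
  define w where "w = shift z \<omega>"
  have \<Lambda>: "0 \<le> \<Lambda>" unfolding \<Lambda>_def using b by simp
  have bw: "\<And>t. \<bar>E - w t\<bar> \<le> b" unfolding w_def shift_def using bnd by simp
  have "(1::nat) \<le> P0^3" using N(3) by simp
  with N(2) have "1 \<le> N" by linarith
  then obtain p where p: "1 \<le> p" "N \<le> p^3" "(real p - 1)^3 < real N" by (rule obtain_cube_root_ceiling)
  have Np: "real N \<le> real p ^ 3" using p(2) of_nat_le_iff[of N "p^3"] by simp
  have "n0^3 \<le> p^3" "P0^3 \<le> p^3" using N(1,2) p(2) by linarith+
  then have "n0 \<le> p" "P0 \<le> p" using power_mono_iff[of n0 p 3] power_mono_iff[of P0 p 3] by simp_all
  moreover have "(ln (\<bar>z\<bar> + 1)) powr (2/3) \<le> real p"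
    by (intro powr_two_thirds_le order_trans[OF Nz Np]) simp_all
  ultimately have cube: "ln (mnorm (tmn (p^3) E w)) \<le> real p ^ 3 * (L E + \<epsilon>)"
    unfolding w_def using ln_mnorm_tmn_cube_le[OF avg E p(1)] by blast
  define r where "r = real (p^3 - N)"
  have longer: "ln (mnorm (tmn N E w)) \<le> r * \<Lambda> + ln (mnorm (tmn (p^3) E w))"
    unfolding r_def \<Lambda>_def using ln_mnorm_tmn_le_longer[OF bw b p(2)] .
  have r: "r = real p ^ 3 - real N" "0 \<le> r" unfolding r_def using p(2) by (simp_all add: of_nat_diff)
  have "48 * (\<Lambda> + 1) \<le> \<epsilon> * real P0"
    using N(4) \<epsilon>(1) unfolding \<Lambda>_def by (simp add: pos_divide_le_eq mult.commute)
  also have "\<dots> \<le> \<epsilon> * real p" using \<open>P0 \<le> p\<close> \<epsilon>(1) by simp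
  finally have cost: "r * (2 * \<Lambda> + 2) \<le> \<epsilon> * real N"
    unfolding r(1) using \<open>P0 \<le> p\<close> N(3) p(3) \<Lambda> \<epsilon>(1) by (intro cube_excess_le) auto
  have "L E + \<epsilon> \<le> \<Lambda> + 2"
    using lyap_bounds_from_average_approx(2)[OF avg \<epsilon>(2) E bnd b] \<epsilon>(2) unfolding \<Lambda>_def by simp
  then have excess: "r * (L E + \<epsilon>) \<le> r * (\<Lambda> + 2)" using r(2) by (rule mult_left_mono)
  have "ln (mnorm (tmn N E w)) \<le> r * \<Lambda> + (real N + r) * (L E + \<epsilon>)"
    using longer cube r(1) by simp
  also have "\<dots> = real N * (L E + \<epsilon>) + (r * \<Lambda> + r * (L E + \<epsilon>))" by (simp add: algebra_simps)
  also have "\<dots> \<le> real N * (L E + \<epsilon>) + r * (2 * \<Lambda> + 2)" using excess by (simp add: algebra_simps)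
  also have "\<dots> \<le> real N * (L E + 2 * \<epsilon>)" using cost by (simp add: algebra_simps)
  finally have "ln (mnorm (tmn N E w)) \<le> real N * (L E + 2 * \<epsilon>)" .
  moreover have "0 < real N" using \<open>1 \<le> N\<close> by simp
  ultimately show ?thesis unfolding w_def by (simp add: field_simps)
qed

definition transfer_growth_bound ::
    "(real \<Rightarrow> real) \<Rightarrow> real set \<Rightarrow> (int \<Rightarrow> real) \<Rightarrow> real \<Rightarrow> nat \<Rightarrow> bool" where
  "transfer_growth_bound L S \<omega> \<epsilon> n1 \<longleftrightarrow> (\<forall>E \<in> S. \<forall>(n :: nat) (z :: int).
     real n \<ge> max (real n1) ((ln (\<bar>z\<bar> + 1))^2) \<longrightarrow>
     (1 / real n) * ln (mnorm (tmn n E (shift z \<omega>))) \<le> L E + 2 * \<epsilon>)"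

lemma transfer_growth_bound_from_average_approx:
  assumes bnd: "\<And>E t. E \<in> S \<Longrightarrow> \<bar>E - \<omega> t\<bar> \<le> b" and "0 \<le> b" and "0 < \<epsilon>" "\<epsilon> < 1"
    and "uniform_average_approx L S \<omega> \<epsilon> n0"
    and "n0^3 \<le> n1" "P0^3 \<le> n1" "2 \<le> P0" "48 * (ln (b + 2) + 1) / \<epsilon> \<le> real P0"
  shows "transfer_growth_bound L S \<omega> \<epsilon> n1"
  unfolding transfer_growth_bound_def
proof (intro ballI allI impI)
  fix E n and z :: int
  assume "E \<in> S" and n: "max (real n1) ((ln (\<bar>z\<bar> + 1))^2) \<le> real n"
  then have "n1 \<le> n" by simp
  show "(1 / real n) * ln (mnorm (tmn n E (shift z \<omega>))) \<le> L E + 2 * \<epsilon>"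
    by (rule transfer_growth_le[OF bnd[OF \<open>E \<in> S\<close>] assms(2-5) \<open>E \<in> S\<close>])
      (use n assms(6-9) \<open>n1 \<le> n\<close> in auto)
qed

section \<open>Decay of the Green's function\<close>

lemma ln_squared_le_sqrt:
  fixes x :: real
  assumes "1 \<le> x"
  shows "(ln x)^2 \<le> 16 * sqrt x"
proof -
  have x: "0 < x" using assms by simp
  have "ln x = 4 * ln (x powr (1/4))" using x by (simp add: ln_powr)
  also have "\<dots> \<le> 4 * x powr (1/4)" using ln_le_minus_one[of "x powr (1/4)"] x by simp
  finally have "(ln x)^2 \<le> (4 * x powr (1/4))^2" using assms by (intro power_mono) auto
  also have "\<dots> = 16 * (x powr (1/4))^2" by (simp add: power_mult_distrib)
  also have "(x powr (1/4))^2 = x powr (1/2)" using x by (simp add: powr_realpow[symmetric] powr_powr)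
  finally show ?thesis using x by (simp add: powr_half_sqrt)
qed

lemma two_ln_squared_le:
  fixes \<epsilon> :: real
  assumes "0 < \<epsilon>" and "4096 / \<epsilon>^2 \<le> real n" and "1 \<le> n"
  shows "2 * (ln (real n + 1))^2 \<le> \<epsilon> * real n"
proof -
  have "2 * (ln (real n + 1))^2 \<le> 32 * sqrt (real n + 1)"
    using ln_squared_le_sqrt[of "real n + 1"] by simp
  also have "\<dots> \<le> 32 * sqrt (4 * real n)" using assms(3) by simp
  also have "\<dots> = 64 * sqrt (real n)" by (simp add: real_sqrt_mult)
  also have "\<dots> \<le> \<epsilon> * sqrt (real n) * sqrt (real n)"
  proof -
    have "4096 \<le> \<epsilon>^2 * real n" using assms(1,2) by (simp add: field_simps)
    then have "sqrt (64^2) \<le> sqrt (\<epsilon>^2 * real n)" by (intro real_sqrt_le_mono) simp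
    then have "64 \<le> \<epsilon> * sqrt (real n)" using assms(1) by (simp add: real_sqrt_mult)
    then show ?thesis by (simp add: mult_right_mono)
  qed
  finally show ?thesis by (simp add: mult.assoc)
qed

lemma ln_squared_shift_le:
  fixes z z' :: int
  assumes "\<bar>z'\<bar> \<le> \<bar>z\<bar> + int n"
  shows "(ln (\<bar>z'\<bar> + 1))^2 \<le> 2 * (ln (\<bar>z\<bar> + 1))^2 + 2 * (ln (real n + 1))^2"
proof -
  define a where "a = ln (\<bar>real_of_int z\<bar> + 1)"
  define a' where "a' = ln (real n + 1)"
  have "real_of_int \<bar>z'\<bar> \<le> real_of_int (\<bar>z\<bar> + int n)" using assms by (simp only: of_int_le_iff)
  then have "\<bar>real_of_int z'\<bar> \<le> \<bar>real_of_int z\<bar> + real n" by simp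
  moreover have "(\<bar>real_of_int z\<bar> + 1) * (real n + 1) = \<bar>real_of_int z\<bar> * real n + \<bar>real_of_int z\<bar> + real n + 1"
    by (simp add: algebra_simps)
  moreover have "0 \<le> \<bar>real_of_int z\<bar> * real n" by simp
  ultimately have "\<bar>real_of_int z'\<bar> + 1 \<le> (\<bar>real_of_int z\<bar> + 1) * (real n + 1)" by linarith
  then have "ln (\<bar>real_of_int z'\<bar> + 1) \<le> a + a'"
    unfolding a_def a'_def by (simp add: ln_mult_pos[symmetric])
  then have "(ln (\<bar>real_of_int z'\<bar> + 1))^2 \<le> (a + a')^2" by (intro power_mono) auto
  also have "\<dots> \<le> 2 * a^2 + 2 * a'^2" using sum_squares_bound[of a a'] by (simp add: power2_sum)
  finally show ?thesis unfolding a_def a'_def by simp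
qed

text \<open>
  Lengths below the scale of the growth bound are \<open>O(\<epsilon> n)\<close>, so for them the trivial bound
  \<open>(b + 2)\<^sup>c\<close> suffices.
\<close>
lemma mnorm_tmn_block_le:
  fixes z z' :: int
  assumes bnd: "\<And>t. \<bar>E - \<omega> t\<bar> \<le> b" and b: "0 \<le> b" and \<epsilon>: "0 < \<epsilon>"
    and growth: "transfer_growth_bound L S \<omega> \<epsilon> n1" and E: "E \<in> S" and L: "- 2 < L E"
    and n1: "1 \<le> n1" "real n1 \<le> \<epsilon> * real n"
    and ez: "2 * (ln (\<bar>z\<bar> + 1))^2 \<le> \<epsilon> * real n"
    and en: "2 * (ln (real n + 1))^2 \<le> \<epsilon> * real n"
    and c: "c \<le> n" and z': "\<bar>z'\<bar> \<le> \<bar>z\<bar> + int n"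
  shows "mnorm (tmn c E (shift z' \<omega>)) \<le> exp (real c * L E + 2 * \<epsilon> * real n * (ln (b + 2) + 2))"
proof -
  define \<Lambda> where "\<Lambda> = ln (b + 2)"
  have \<Lambda>: "0 \<le> \<Lambda>" unfolding \<Lambda>_def using b by simp
  have "ln (mnorm (tmn c E (shift z' \<omega>))) \<le> real c * L E + 2 * \<epsilon> * real n * (\<Lambda> + 2)"
  proof (cases "real c \<ge> max (real n1) ((ln (\<bar>z'\<bar> + 1))^2)")
    case True
    then have "0 < real c" using n1(1) by simp
    moreover have "(1 / real c) * ln (mnorm (tmn c E (shift z' \<omega>))) \<le> L E + 2 * \<epsilon>"
      using growth E True unfolding transfer_growth_bound_def by blast
    ultimately have "ln (mnorm (tmn c E (shift z' \<omega>))) \<le> real c * L E + 2 * \<epsilon> * real c"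
      by (simp add: field_simps)
    also have "\<dots> \<le> real c * L E + 2 * \<epsilon> * real n * (\<Lambda> + 2)"
      using c \<epsilon> \<Lambda> mult_mono[of "real c" "real n" 1 "\<Lambda> + 2"] by (simp add: mult.assoc)
    finally show ?thesis .
  next
    case False
    then have "real c < real n1 \<or> real c < (ln (\<bar>z'\<bar> + 1))^2" by auto
    then have short: "real c \<le> 2 * (\<epsilon> * real n)"
      using ln_squared_shift_le[OF z'] ez en n1 \<epsilon> by (elim disjE) linarith+
    have "ln (mnorm (tmn c E (shift z' \<omega>))) \<le> real c * \<Lambda>"
      unfolding \<Lambda>_def using bnd b by (intro ln_mnorm_tmn_le) (auto simp: shift_def)
    also have "\<dots> \<le> real c * L E + real c * (\<Lambda> + 2)"
    proof -
      have "0 \<le> real c * (L E + 2)" using L by simp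
      then show ?thesis by (simp add: distrib_left)
    qed
    also have "\<dots> \<le> real c * L E + 2 * \<epsilon> * real n * (\<Lambda> + 2)"
      using short \<Lambda> mult_right_mono[OF short, of "\<Lambda> + 2"] by (simp add: mult.assoc)
    finally show ?thesis .
  qed
  then show ?thesis unfolding \<Lambda>_def using mnorm_tmn_pos[of c E "shift z' \<omega>"]
    by (metis exp_le_cancel_iff exp_ln)
qed

lemma abs_green_le:
  fixes z :: int
  assumes bnd: "\<And>t. \<bar>E - \<omega> t\<bar> \<le> b" and b: "0 \<le> b" and \<epsilon>: "0 < \<epsilon>" "\<epsilon> < 1"
    and growth: "transfer_growth_bound L S \<omega> \<epsilon> n1" and E: "E \<in> S" and L: "- 2 < L E"
    and n1: "1 \<le> n1" "4096 / \<epsilon>^2 \<le> real n1"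
    and n: "real n \<ge> (1 / \<epsilon>) * max (real n1) (2 * (ln (\<bar>z\<bar> + 1))^2)"
    and spec: "E \<notin> spec (Hres (shift z \<omega>) n)" and j: "j < n" and k: "k < n"
  shows "\<bar>green (shift z \<omega>) n E j k\<bar>
    \<le> exp ((real n - \<bar>real j - real k\<bar>) * L E + (4 * ln (b + 2) + 10) * \<epsilon> * real n)
       / \<bar>Determinant.det (Hres_minus (shift z \<omega>) n E)\<bar>"
proof -
  define X where "X = 2 * \<epsilon> * real n * (ln (b + 2) + 2)"
  define a where "a = min j k"
  define s where "s = Suc (max j k)"
  have "max (real n1) (2 * (ln (\<bar>z\<bar> + 1))^2) \<le> \<epsilon> * real n"
    using n \<epsilon>(1) by (simp add: field_simps)
  then have en1: "real n1 \<le> \<epsilon> * real n" and ez: "2 * (ln (\<bar>z\<bar> + 1))^2 \<le> \<epsilon> * real n" by auto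
  have "\<epsilon> * real n \<le> real n" using mult_right_mono[of \<epsilon> 1 "real n"] \<epsilon> by simp
  with n1(2) en1 have "4096 / \<epsilon>^2 \<le> real n" by linarith
  then have en: "2 * (ln (real n + 1))^2 \<le> \<epsilon> * real n" using \<epsilon>(1) j by (intro two_ln_squared_le) auto
  note block = mnorm_tmn_block_le[OF bnd b \<epsilon>(1) growth E L n1(1) en1 ez en]
  have "\<bar>green (shift z \<omega>) n E j k\<bar> * \<bar>Determinant.det (Hres_minus (shift z \<omega>) n E)\<bar>
      \<le> mnorm (tmn a E (shift z \<omega>)) * mnorm (tmn (n - s) E (shift (z + int s) \<omega>))"
    using abs_green_mult_abs_det_le[OF spec j k] by (simp add: a_def s_def)
  also have "\<dots> \<le> exp (real a * L E + X) * exp (real (n - s) * L E + X)"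
    unfolding X_def using j k
    by (intro mult_mono block mnorm_nonneg) (auto simp: a_def s_def)
  also have "\<dots> = exp ((real n - \<bar>real j - real k\<bar>) * L E - L E + 2 * X)"
    using j k unfolding a_def s_def by (cases "j \<le> k") (auto simp: of_nat_diff algebra_simps simp flip: exp_add)
  also have "\<dots> \<le> exp ((real n - \<bar>real j - real k\<bar>) * L E + (4 * ln (b + 2) + 10) * \<epsilon> * real n)"
    using L en1 n1(1) unfolding X_def by (simp add: algebra_simps)
  finally show ?thesis
    using det_Hres_minus_nonzero[OF spec] by (simp add: pos_le_divide_eq)
qed

definition green_decay_bound ::
    "(real \<Rightarrow> real) \<Rightarrow> real set \<Rightarrow> (int \<Rightarrow> real) \<Rightarrow> real \<Rightarrow> real \<Rightarrow> nat \<Rightarrow> bool" where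
  "green_decay_bound L S \<omega> \<epsilon> C n1 \<longleftrightarrow> (\<forall>(n :: nat) (z :: int) E j k.
     real n \<ge> (1 / \<epsilon>) * max (real n1) (2 * (ln (\<bar>z\<bar> + 1))^2) \<and>
     E \<in> S - spec (Hres (shift z \<omega>) n) \<and> j < n \<and> k < n \<longrightarrow>
     \<bar>green (shift z \<omega>) n E j k\<bar>
       \<le> exp ((real n - \<bar>real j - real k\<bar>) * L E + C * \<epsilon> * real n)
          / \<bar>Determinant.det (shifted (Hres (shift z \<omega>) n) E)\<bar>)"

lemma bounds_from_average_approx:
  assumes bnd: "\<And>E t. E \<in> S \<Longrightarrow> \<bar>E - \<omega> t\<bar> \<le> b" and b: "0 \<le> b" and \<epsilon>: "0 < \<epsilon>" "\<epsilon> < 1"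
    and avg: "uniform_average_approx L S \<omega> \<epsilon> n0"
  shows "\<exists>n1. transfer_growth_bound L S \<omega> \<epsilon> n1 \<and> green_decay_bound L S \<omega> \<epsilon> (4 * ln (b + 2) + 10) n1"
proof -
  define P0 :: nat where "P0 = nat \<lceil>48 * (ln (b + 2) + 1) / \<epsilon>\<rceil> + 2"
  define n1 :: nat where "n1 = max (max 1 (n0^3)) (max (P0^3) (nat \<lceil>4096 / \<epsilon>^2\<rceil>))"
  have n1: "1 \<le> n1" "4096 / \<epsilon>^2 \<le> real n1" unfolding n1_def by linarith+
  have "2 \<le> P0" "48 * (ln (b + 2) + 1) / \<epsilon> \<le> real P0" unfolding P0_def by linarith+
  moreover have "n0^3 \<le> n1" "P0^3 \<le> n1" unfolding n1_def by auto
  ultimately have growth: "transfer_growth_bound L S \<omega> \<epsilon> n1"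
    using transfer_growth_bound_from_average_approx[OF _ b \<epsilon> avg] bnd by blast
  have L: "- 2 < L E" if "E \<in> S" for E
    using lyap_bounds_from_average_approx(1)[OF avg \<epsilon>(2) that bnd[OF that] b] .
  show ?thesis
    using abs_green_le[OF bnd b \<epsilon> growth _ L n1] growth unfolding green_decay_bound_def by blast
qed

lemma abs_msupp_le_kappa:
  assumes "compact (msupp m)" and "a \<in> msupp m"
  shows "\<bar>a\<bar> \<le> kappa m - 2"
proof -
  obtain M where "\<And>x. x \<in> msupp m \<Longrightarrow> \<bar>x\<bar> \<le> M"
    using compact_imp_bounded[OF assms(1)] unfolding bounded_iff by auto
  then have "bdd_above (abs ` msupp m)" by (auto intro!: bdd_aboveI2)
  with assms(2) show ?thesis unfolding kappa_def by (auto intro: cSup_upper)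
qed

lemma abs_SigmaHat_minus_msupp_le:
  assumes "compact (msupp m)" and "E \<in> SigmaHat m" and "a \<in> msupp m"
  shows "\<bar>E - a\<bar> \<le> 2 * kappa m - 2"
  using abs_msupp_le_kappa[OF assms(1,3)] assms(2) unfolding SigmaHat_def by auto

text \<open>
  Only the compactness of the support and its nonemptiness enter the proof: the averaged
  hypothesis already carries all the probabilistic information.
\<close>
theorem corollary5p3:
  fixes m :: "real measure"
  assumes "prob_space m" and "sets m = sets borel"
    and "compact (msupp m)"
    and "\<exists>a b. a \<in> msupp m \<and> b \<in> msupp m \<and> a \<noteq> b"
  shows "\<exists>C0 > 0. \<forall>\<epsilon> :: real. \<forall>\<omega> :: int \<Rightarrow> real.
     0 < \<epsilon> \<and> \<epsilon> < 1 \<and> (\<forall>n. \<omega> n \<in> msupp m) \<and>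
     (\<exists>n0 :: nat. \<forall>(n :: nat) (z :: int) E.
        real n \<ge> max (real n0) ((ln (\<bar>z\<bar> + 1)) powr (2/3)) \<and> E \<in> SigmaHat m \<longrightarrow>
        \<bar>lyap m E - (1 / (real n)^2) * (\<Sum>s<n^2. Fn n (shift (z + int s * int n) \<omega>) E)\<bar> < \<epsilon>)
     \<longrightarrow>
     (\<exists>n1 :: nat.
       (\<forall>E \<in> SigmaHat m. \<forall>(n :: nat) (z :: int).
          real n \<ge> max (real n1) ((ln (\<bar>z\<bar> + 1))^2) \<longrightarrow>
          (1 / real n) * ln (mnorm (tmn n E (shift z \<omega>))) \<le> lyap m E + 2 * \<epsilon>) \<and>
       (\<forall>(n :: nat) (z :: int) E j k.
          real n \<ge> (1 / \<epsilon>) * max (real n1) (2 * (ln (\<bar>z\<bar> + 1))^2) \<and>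
          E \<in> SigmaHat m - spec (Hres (shift z \<omega>) n) \<and> j < n \<and> k < n \<longrightarrow>
          \<bar>green (shift z \<omega>) n E j k\<bar>
            \<le> exp ((real n - \<bar>real j - real k\<bar>) * lyap m E + C0 * \<epsilon> * real n)
               / \<bar>Determinant.det (shifted (Hres (shift z \<omega>) n) E)\<bar>))"
proof -
  define b where "b = 2 * kappa m - 2"
  obtain a where "a \<in> msupp m" using assms(4) by blast
  then have b: "0 \<le> b"
    using abs_msupp_le_kappa[OF assms(3)] unfolding b_def by fastforce
  have "\<exists>n1. transfer_growth_bound (lyap m) (SigmaHat m) \<omega> \<epsilon> n1
      \<and> green_decay_bound (lyap m) (SigmaHat m) \<omega> \<epsilon> (4 * ln (b + 2) + 10) n1"
    if "0 < \<epsilon>" "\<epsilon> < 1" "\<forall>n. \<omega> n \<in> msupp m"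
      and "uniform_average_approx (lyap m) (SigmaHat m) \<omega> \<epsilon> n0" for \<epsilon> \<omega> n0
  proof (rule bounds_from_average_approx[OF _ b that(1,2,4)])
    show "\<bar>E - \<omega> t\<bar> \<le> b" if "E \<in> SigmaHat m" for E t
      using abs_SigmaHat_minus_msupp_le[OF assms(3) that] \<open>\<forall>n. \<omega> n \<in> msupp m\<close> unfolding b_def by blast
  qed
  moreover have "0 < 4 * ln (b + 2) + 10" using b ln_ge_zero[of "b + 2"] by linarith
  ultimately show ?thesis
    unfolding uniform_average_approx_def transfer_growth_bound_def green_decay_bound_def by blast
qed

end
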